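(* Let $M_i=(Q_i,R_i,X_i,\delta_i)$, $i=1,2,3,4$, be rough finite state machines. Then $(M_1\circ M_2)\times(M_3\circ M_4)\preceq(M_1\times M_3)\circ(M_2\times M_4)$.
   Context: For a finite set $Q$ with an equivalence relation $R$ and $A\subseteq Q$, $\underline{A}$ is the union of the $R$-classes contained in $A$ and $\overline{A}$ is the union of the $R$-classes meeting $A$. A rough finite state machine (RFSM) is $M=(Q,R,X,\delta)$ with $Q$ a nonempty finite state set, $R$ an equivalence relation on $Q$, $X$ a nonempty finite input set, and $\delta$ assigning to each $(q,a)\in Q\times X$ a pair $\delta(q,a)=(\underline{\delta(q,a)},\overline{\delta(q,a)})=(\underline{A},\overline{A})$ for some $A\subseteq Q$. For equivalence relations $R,R'$ on $Q,Q'$, $R\times R'$ is the equivalence relation on $Q\times Q'$ with $((p,p'),(q,q'))\in R\times R'$ iff $(p,q)\in R$ and $(p',q')\in R'$. Full direct product: for RFSMs $N=(Q,R,X,\delta)$, $N'=(Q',R',X',\delta')$, $N\times N'=(Q\times Q',R\times R',X\times X',\delta\times\delta')$ where $(\delta\times\delta')((q,q'),(x,x'))$ has lower part $\underline{\delta(q,x)}\times\underline{\delta'(q',x')}$ and upper part $\overline{\delta(q,x)}\times\overline{\delta'(q',x')}$. Wreath product: $N\circ N'=(Q\times Q',R\times R',X^{Q'}\times X',\delta\circ\delta')$, where $X^{Q'}$ is the set of all maps $Q'\to X$, and $(\delta\circ\delta')((q,q'),(f,x'))$ has lower part $\underline{\delta(q,f(q'))}\times\underline{\delta'(q',x')}$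 and upper part $\overline{\delta(q,f(q'))}\times\overline{\delta'(q',x')}$. These constructions are applied iteratively (e.g. $(M_1\circ M_2)\times(M_3\circ M_4)$ has state set $(Q_1\times Q_2)\times(Q_3\times Q_4)$, relation $(R_1\times R_2)\times(R_3\times R_4)$ and input set $(X_1^{Q_2}\times X_2)\times(X_3^{Q_4}\times X_4)$; $(M_1\times M_3)\circ(M_2\times M_4)$ has state set $(Q_1\times Q_3)\times(Q_2\times Q_4)$ and input set $(X_1\times X_3)^{Q_2\times Q_4}\times(X_2\times X_4)$). Covering: for RFSMs $N_1=(P_1,S_1,Y_1,\mu_1)$ and $N_2=(P_2,S_2,Y_2,\mu_2)$, a covering of $N_1$ by $N_2$ is a pair $(\eta,\xi)$ with $\eta:P_2\to P_1$ surjective and $\xi:Y_1\to Y_2$ a map (extended to words by $\xi(e)=e$, $\xi(y_1\cdots y_n)=\xi(y_1)\cdots\xi(y_n)$) such that (i) $(p,q)\in S_2\Rightarrow(\eta(p),\eta(q))\in S_1$ for all $p,q\in P_2$, and (ii) for all $p\in P_2$, $y\in Y_1$: $\underline{\mu_1(\eta(p),y)}\subseteq\eta(\underline{\mu_2(p,\xi(y))})$ and $\overline{\mu_1(\eta(p),y)}\subseteq\eta(\overline{\mu_2(p,\xi(y))})$. $N_1\preceq N_2$ means such a covering exists. *)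

theory Defs
  imports "HOL-Library.FuncSet"
begin

text \<open>A rough finite state machine M = (Q, R, X, delta). The transition delta q a
  is the pair (lower approximation, upper approximation).\<close>
record ('q, 'x) rfsm =
  st :: "'q set"
  rl :: "('q \<times> 'q) set"
  inp :: "'x set"
  tr :: "'q \<Rightarrow> 'x \<Rightarrow> 'q set \<times> 'q set"

definition lower_appr :: "'q set \<Rightarrow> ('q \<times> 'q) set \<Rightarrow> 'q set \<Rightarrow> 'q set" where
  "lower_appr Q R A = \<Union>{C \<in> Q // R. C \<subseteq> A}"

definition upper_appr :: "'q set \<Rightarrow> ('q \<times> 'q) set \<Rightarrow> 'q set \<Rightarrow> 'q set" where
  "upper_appr Q R A = \<Union>{C \<in> Q // R. C \<inter> A \<noteq> {}}"

definition is_rfsm :: "('q, 'x) rfsm \<Rightarrow> bool" where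
  "is_rfsm M \<longleftrightarrow> st M \<noteq> {} \<and> finite (st M) \<and> equiv (st M) (rl M) \<and>
     inp M \<noteq> {} \<and> finite (inp M) \<and>
     (\<forall>q \<in> st M. \<forall>a \<in> inp M. \<exists>A \<subseteq> st M.
        tr M q a = (lower_appr (st M) (rl M) A, upper_appr (st M) (rl M) A))"

definition prod_rel :: "('a \<times> 'a) set \<Rightarrow> ('b \<times> 'b) set \<Rightarrow> (('a \<times> 'b) \<times> ('a \<times> 'b)) set" where
  "prod_rel R R' = {((p, p'), (q, q')). (p, q) \<in> R \<and> (p', q') \<in> R'}"

definition dprod :: "('q, 'x) rfsm \<Rightarrow> ('p, 'y) rfsm \<Rightarrow> ('q \<times> 'p, 'x \<times> 'y) rfsm" where
  "dprod N N' = \<lparr> st = st N \<times> st N', rl = prod_rel (rl N) (rl N'),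
     inp = inp N \<times> inp N',
     tr = (\<lambda>(q, q') (x, x').
        (fst (tr N q x) \<times> fst (tr N' q' x'), snd (tr N q x) \<times> snd (tr N' q' x'))) \<rparr>"

text \<open>Wreath product; X^{Q'} is the set of (extensional) maps Q' \<rightarrow> X.\<close>
definition wprod :: "('q, 'x) rfsm \<Rightarrow> ('p, 'y) rfsm \<Rightarrow> ('q \<times> 'p, ('p \<Rightarrow> 'x) \<times> 'y) rfsm" where
  "wprod N N' = \<lparr> st = st N \<times> st N', rl = prod_rel (rl N) (rl N'),
     inp = (st N' \<rightarrow>\<^sub>E inp N) \<times> inp N',
     tr = (\<lambda>(q, q') (f, x').
        (fst (tr N q (f q')) \<times> fst (tr N' q' x'), snd (tr N q (f q')) \<times> snd (tr N' q' x'))) \<rparr>"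

definition is_covering :: "('p \<Rightarrow> 'q) \<Rightarrow> ('x \<Rightarrow> 'y) \<Rightarrow> ('q, 'x) rfsm \<Rightarrow> ('p, 'y) rfsm \<Rightarrow> bool" where
  "is_covering \<eta> \<xi> N1 N2 \<longleftrightarrow>
     \<eta> ` st N2 = st N1 \<and> \<xi> ` inp N1 \<subseteq> inp N2 \<and>
     (\<forall>p \<in> st N2. \<forall>q \<in> st N2. (p, q) \<in> rl N2 \<longrightarrow> (\<eta> p, \<eta> q) \<in> rl N1) \<and>
     (\<forall>p \<in> st N2. \<forall>y \<in> inp N1.
        fst (tr N1 (\<eta> p) y) \<subseteq> \<eta> ` fst (tr N2 p (\<xi> y)) \<and>
        snd (tr N1 (\<eta> p) y) \<subseteq> \<eta> ` snd (tr N2 p (\<xi> y)))"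

definition covered_by :: "('q, 'x) rfsm \<Rightarrow> ('p, 'y) rfsm \<Rightarrow> bool" (infix "\<preceq>\<^sub>R" 50) where
  "N1 \<preceq>\<^sub>R N2 \<longleftrightarrow> (\<exists>\<eta> \<xi>. is_covering \<eta> \<xi> N1 N2)"

end

theory Submission
  imports Defs
begin

text \<open>Both machines have the state set \<open>(Q\<^sub>1 \<times> Q\<^sub>2) \<times> (Q\<^sub>3 \<times> Q\<^sub>4)\<close> up to swapping the two middle
  factors, and relations and transitions of both are componentwise, so this swap is a
  bijection of state sets preserving the relations. An input \<open>((f, x\<^sub>2), (g, x\<^sub>4))\<close> of the
  left machine is sent to \<open>((b, d) \<mapsto> (f b, g d), (x\<^sub>2, x\<^sub>4))\<close>; then each transition of the
  left machine is exactly the swapped image of the corresponding transition of the right one.\<close>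

definition swap_middle :: "('a \<times> 'b) \<times> ('c \<times> 'd) \<Rightarrow> ('a \<times> 'c) \<times> ('b \<times> 'd)" where
  "swap_middle = (\<lambda>((a, b), (c, d)). ((a, c), (b, d)))"

lemma swap_middle_simp [simp]: "swap_middle ((a, b), (c, d)) = ((a, c), (b, d))"
  by (simp add: swap_middle_def)

lemma image_swap_middle_Times:
  "swap_middle ` ((A \<times> B) \<times> (C \<times> D)) = (A \<times> C) \<times> (B \<times> D)"
  by (force simp: image_iff)

lemma swap_middle_in_prod_rel_iff:
  "(swap_middle p, swap_middle q) \<in> prod_rel (prod_rel R\<^sub>1 R\<^sub>2) (prod_rel R\<^sub>3 R\<^sub>4) \<longleftrightarrow>
     (p, q) \<in> prod_rel (prod_rel R\<^sub>1 R\<^sub>3) (prod_rel R\<^sub>2 R\<^sub>4)"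
  by (cases p, cases q) (auto simp: prod_rel_def)

text \<open>Outside \<open>Q\<^sub>2 \<times> Q\<^sub>4\<close> the value is \<open>undefined\<close>, so that the result lies in the
  extensional function space of the wreath product.\<close>
definition pair_inputs ::
    "'q2 set \<Rightarrow> 'q4 set \<Rightarrow> (('q2 \<Rightarrow> 'x1) \<times> 'x2) \<times> (('q4 \<Rightarrow> 'x3) \<times> 'x4) \<Rightarrow>
       ('q2 \<times> 'q4 \<Rightarrow> 'x1 \<times> 'x3) \<times> ('x2 \<times> 'x4)" where
  "pair_inputs Q\<^sub>2 Q\<^sub>4 = (\<lambda>((f, x\<^sub>2), (g, x\<^sub>4)).
     (\<lambda>(b, d). if b \<in> Q\<^sub>2 \<and> d \<in> Q\<^sub>4 then (f b, g d) else undefined, (x\<^sub>2, x\<^sub>4)))"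

lemma pair_inputs_in_PiE:
  assumes "f \<in> Q\<^sub>2 \<rightarrow>\<^sub>E X\<^sub>1" "g \<in> Q\<^sub>4 \<rightarrow>\<^sub>E X\<^sub>3" "x\<^sub>2 \<in> X\<^sub>2" "x\<^sub>4 \<in> X\<^sub>4"
  shows "pair_inputs Q\<^sub>2 Q\<^sub>4 ((f, x\<^sub>2), (g, x\<^sub>4)) \<in> (Q\<^sub>2 \<times> Q\<^sub>4 \<rightarrow>\<^sub>E X\<^sub>1 \<times> X\<^sub>3) \<times> (X\<^sub>2 \<times> X\<^sub>4)"
  using assms by (auto simp: pair_inputs_def PiE_def Pi_def extensional_def)

lemma is_coveringI_image:
  assumes "\<eta> ` st N\<^sub>2 = st N\<^sub>1" and "\<xi> ` inp N\<^sub>1 \<subseteq> inp N\<^sub>2"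
    and "\<And>p q. p \<in> st N\<^sub>2 \<Longrightarrow> q \<in> st N\<^sub>2 \<Longrightarrow> (p, q) \<in> rl N\<^sub>2 \<Longrightarrow> (\<eta> p, \<eta> q) \<in> rl N\<^sub>1"
    and "\<And>p y. p \<in> st N\<^sub>2 \<Longrightarrow> y \<in> inp N\<^sub>1 \<Longrightarrow>
           tr N\<^sub>1 (\<eta> p) y = map_prod ((`) \<eta>) ((`) \<eta>) (tr N\<^sub>2 p (\<xi> y))"
  shows "is_covering \<eta> \<xi> N\<^sub>1 N\<^sub>2"
  unfolding is_covering_def using assms by (simp add: map_prod_def split_beta)

lemma tr_dprod_wprod_swap_middle:
  assumes "b \<in> st M\<^sub>2" "d \<in> st M\<^sub>4"
  shows "tr (dprod (wprod M\<^sub>1 M\<^sub>2) (wprod M\<^sub>3 M\<^sub>4)) (swap_middle ((a, c), (b, d))) ((f, x\<^sub>2), (g, x\<^sub>4)) =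
    map_prod ((`) swap_middle) ((`) swap_middle)
      (tr (wprod (dprod M\<^sub>1 M\<^sub>3) (dprod M\<^sub>2 M\<^sub>4)) ((a, c), (b, d))
        (pair_inputs (st M\<^sub>2) (st M\<^sub>4) ((f, x\<^sub>2), (g, x\<^sub>4))))"
  using assms by (simp add: dprod_def wprod_def pair_inputs_def image_swap_middle_Times)

theorem proposition3p2:
  fixes M1 :: "('q1, 'x1) rfsm" and M2 :: "('q2, 'x2) rfsm"
    and M3 :: "('q3, 'x3) rfsm" and M4 :: "('q4, 'x4) rfsm"
  assumes "is_rfsm M1" and "is_rfsm M2" and "is_rfsm M3" and "is_rfsm M4"
  shows "dprod (wprod M1 M2) (wprod M3 M4) \<preceq>\<^sub>R wprod (dprod M1 M3) (dprod M2 M4)"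
  unfolding covered_by_def
proof (intro exI is_coveringI_image)
  show "swap_middle ` st (wprod (dprod M1 M3) (dprod M2 M4)) = st (dprod (wprod M1 M2) (wprod M3 M4))"
    by (simp add: dprod_def wprod_def image_swap_middle_Times)
  show "pair_inputs (st M2) (st M4) ` inp (dprod (wprod M1 M2) (wprod M3 M4))
      \<subseteq> inp (wprod (dprod M1 M3) (dprod M2 M4))"
    using pair_inputs_in_PiE[of _ "st M2" "inp M1" _ "st M4" "inp M3" _ "inp M2" _ "inp M4"]
    by (force simp: dprod_def wprod_def)
  show "(swap_middle p, swap_middle q) \<in> rl (dprod (wprod M1 M2) (wprod M3 M4))"
    if "(p, q) \<in> rl (wprod (dprod M1 M3) (dprod M2 M4))" for p q
    using that by (simp add: dprod_def wprod_def swap_middle_in_prod_rel_iff)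
  show "tr (dprod (wprod M1 M2) (wprod M3 M4)) (swap_middle p) y =
      map_prod ((`) swap_middle) ((`) swap_middle)
        (tr (wprod (dprod M1 M3) (dprod M2 M4)) p (pair_inputs (st M2) (st M4) y))"
    if "p \<in> st (wprod (dprod M1 M3) (dprod M2 M4))" for p y
    using that tr_dprod_wprod_swap_middle[of _ M2 _ M4 M1 M3]
    by (cases p, cases y) (auto simp: dprod_def wprod_def)
qed

end
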